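(* Let $\mathcal G$ be an undirected connected graph with $n\ge 2$ nodes and $m$ edges, with incidence matrix $D=[D_\tau\ D_c]$, spanning-tree incidence matrix $D_\tau$, matrix $R=[I_{n-1}\ T_\tau^c]$, edge-weight matrix $W\succ 0$ (diagonal) and time-scale matrix $E\succ 0$ (diagonal), all as described in the context. Then the matrix $-L_{e,s}^\tau R W R^T\in\mathbb R^{(n-1)\times(n-1)}$, where $L_{e,s}^\tau=D_\tau^T E^{-1}D_\tau$, is diagonalizable.
   Context: Let $\mathcal G$ be an undirected, connected graph without self-loops, with node set $\{1,\dots,n\}$ ($n\ge2$) and edge set $\mathcal E$, $m=|\mathcal E|$. Give each edge an arbitrary orientation; the incidence matrix $D\in\mathbb R^{n\times m}$ has $D_{il}=1$ if node $i$ is the initial node of edge $l$, $-1$ if it is the terminal node, and $0$ otherwise. Fix a spanning tree $\mathcal G_\tau$ of $\mathcal G$ and order the edges so that the first $n-1$ are the tree edges; write $D=[D_\tau\ D_c]$ with $D_\tau\in\mathbb R^{n\times(n-1)}$ (incidence matrix of the tree) and $D_c$ the incidence matrix of the remaining (co-tree) edges. Set $T_\tau^c=(D_\tau^TD_\tau)^{-1}D_\tau^TD_c$ and $R=[I_{n-1}\ T_\tau^c]\in\mathbb R^{(n-1)\times m}$ (so $D=D_\tau R$). Let $W=\mathrm{diag}(w_1,\dots,w_m)$ with all $w_l>0$ (edge weights) and $E=\mathrm{diag}(\epsilon_1,\dots,\epsilon_n)$ with all $\epsilon_i>0$ (node time scales). The time-scaled edge Laplacian of the tree is $L_{e,s}^\tau=D_\tau^TE^{-1}D_\tau$.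 *)

theory Defs
  imports "Jordan_Normal_Form.Matrix"
begin

text \<open>Nodes are 0,...,n-1; edges are indexed 0,...,m-1, edge l oriented as the
  pair (initial node, terminal node) = e l.  The first n-1 edges are the
  tree edges.\<close>

definition incidence_mat :: "nat \<Rightarrow> nat \<Rightarrow> (nat \<Rightarrow> nat \<times> nat) \<Rightarrow> real mat" where
  "incidence_mat n m e = mat n m (\<lambda>(i,l).
      if fst (e l) = i then 1 else if snd (e l) = i then -1 else 0)"

definition connected_on :: "nat \<Rightarrow> (nat \<times> nat) set \<Rightarrow> bool" where
  "connected_on n es \<longleftrightarrow> (\<forall>i<n. \<forall>j<n. (i, j) \<in> (es \<union> es\<inverse>)\<^sup>*)"

definition spanning_tree :: "nat \<Rightarrow> (nat \<times> nat) set \<Rightarrow> (nat \<times> nat) set \<Rightarrow> bool" where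
  "spanning_tree n es T \<longleftrightarrow> T \<subseteq> es \<and> connected_on n T \<and>
      card ((\<lambda>(a,b). {a,b}) ` T) = n - 1"

definition inv_mat :: "nat \<Rightarrow> real mat \<Rightarrow> real mat" where
  "inv_mat k M = (SOME Q. Q \<in> carrier_mat k k \<and> M * Q = 1\<^sub>m k \<and> Q * M = 1\<^sub>m k)"

definition diag_of :: "nat \<Rightarrow> (nat \<Rightarrow> real) \<Rightarrow> real mat" where
  "diag_of k d = mat k k (\<lambda>(i,j). if i = j then d i else 0)"

definition D_tau :: "nat \<Rightarrow> (nat \<Rightarrow> nat \<times> nat) \<Rightarrow> real mat" where
  "D_tau n e = incidence_mat n (n - 1) e"

definition D_c :: "nat \<Rightarrow> nat \<Rightarrow> (nat \<Rightarrow> nat \<times> nat) \<Rightarrow> real mat" where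
  "D_c n m e = incidence_mat n (m - (n - 1)) (\<lambda>l. e (l + (n - 1)))"

definition T_tau_c :: "nat \<Rightarrow> nat \<Rightarrow> (nat \<Rightarrow> nat \<times> nat) \<Rightarrow> real mat" where
  "T_tau_c n m e = inv_mat (n - 1) (transpose_mat (D_tau n e) * D_tau n e)
                     * transpose_mat (D_tau n e) * D_c n m e"

definition R_mat :: "nat \<Rightarrow> nat \<Rightarrow> (nat \<Rightarrow> nat \<times> nat) \<Rightarrow> real mat" where
  "R_mat n m e = mat (n - 1) m (\<lambda>(i,l).
      if l < n - 1 then (if i = l then 1 else 0) else T_tau_c n m e $$ (i, l - (n - 1)))"

definition L_es_tau :: "nat \<Rightarrow> (nat \<Rightarrow> nat \<times> nat) \<Rightarrow> (nat \<Rightarrow> real) \<Rightarrow> real mat" where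
  "L_es_tau n e eps = transpose_mat (D_tau n e) * inv_mat n (diag_of n eps) * D_tau n e"

definition diagonalizable_mat :: "real mat \<Rightarrow> bool" where
  "diagonalizable_mat A \<longleftrightarrow> (\<exists>B. diagonal_mat B \<and> similar_mat A B)"

end

theory Submission
  imports Defs "Jordan_Normal_Form.Jordan_Normal_Form_Uniqueness"
    "Jordan_Normal_Form.Jordan_Normal_Form_Existence"
begin

text \<open>Write \<open>L = L\<^sub>e\<^sub>,\<^sub>s\<^sup>\<tau>\<close> and \<open>M = R W R\<^sup>T\<close>. \<open>L\<close> is symmetric, and \<open>M\<close> is positive definite
  because \<open>R\<close> contains the identity block \<open>I\<^sub>n\<^sub>-\<^sub>1\<close>. Hence \<open>M (-L M) = -M L M\<close> is symmetric,
  i.e. \<open>A = -L M\<close> is self-adjoint for the inner product \<open>\<langle>x, y\<rangle> = x\<^sup>T M y\<close>. A self-adjoint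
  operator has only real eigenvalues, so \<open>A\<close> has a real Jordan normal form, and
  \<open>ker (A - \<lambda>)\<^sup>2 = ker (A - \<lambda>)\<close> for every \<open>\<lambda>\<close>, so all its Jordan blocks have size one.\<close>

definition pos_def_mat :: "nat \<Rightarrow> real mat \<Rightarrow> bool" where
  "pos_def_mat k M \<longleftrightarrow> M \<in> carrier_mat k k \<and> transpose_mat M = M \<and>
     (\<forall>x \<in> carrier_vec k. x \<noteq> 0\<^sub>v k \<longrightarrow> x \<bullet> (M *\<^sub>v x) > 0)"

lemma pos_def_mat_nonneg:
  assumes "pos_def_mat k M" and "x \<in> carrier_vec k"
  shows "x \<bullet> (M *\<^sub>v x) \<ge> 0"
  using assms by (cases "x = 0\<^sub>v k") (auto simp: pos_def_mat_def less_imp_le)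

lemma scalar_prod_sym_mat:
  fixes M :: "'a :: comm_semiring_0 mat"
  assumes M: "M \<in> carrier_mat k k" and sym: "transpose_mat M = M"
    and x: "x \<in> carrier_vec k" and y: "y \<in> carrier_vec k"
  shows "y \<bullet> (M *\<^sub>v x) = x \<bullet> (M *\<^sub>v y)"
proof -
  have "y \<bullet> (M *\<^sub>v x) = (transpose_mat M *\<^sub>v y) \<bullet> x"
    using transpose_vec_mult_scalar[OF M x y] by simp
  also have "\<dots> = x \<bullet> (M *\<^sub>v y)"
    unfolding sym by (rule comm_scalar_prod[of _ k]) (use M x y in auto)
  finally show ?thesis .
qed

lemma scalar_prod_self_adjoint:
  fixes A M :: "'a :: comm_semiring_0 mat"
  assumes A: "A \<in> carrier_mat k k" and M: "M \<in> carrier_mat k k"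
    and M_sym: "transpose_mat M = M" and MA_sym: "transpose_mat (M * A) = M * A"
    and x: "x \<in> carrier_vec k" and y: "y \<in> carrier_vec k"
  shows "x \<bullet> (M *\<^sub>v (A *\<^sub>v y)) = (A *\<^sub>v x) \<bullet> (M *\<^sub>v y)"
proof -
  have MA: "M * A \<in> carrier_mat k k" using A M by simp
  have "x \<bullet> (M *\<^sub>v (A *\<^sub>v y)) = x \<bullet> ((M * A) *\<^sub>v y)"
    using A M y by simp
  also have "\<dots> = y \<bullet> ((M * A) *\<^sub>v x)"
    by (rule scalar_prod_sym_mat[OF MA MA_sym y x])
  also have "\<dots> = y \<bullet> (M *\<^sub>v (A *\<^sub>v x))"
    using A M x by simp
  also have "\<dots> = (A *\<^sub>v x) \<bullet> (M *\<^sub>v y)"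
    using scalar_prod_sym_mat[OF M M_sym _ y, of "A *\<^sub>v x"] A x by simp
  finally show ?thesis .
qed

lemma transpose_smult_mat: "transpose_mat (c \<cdot>\<^sub>m A) = c \<cdot>\<^sub>m transpose_mat A"
  by (rule eq_matI) auto

lemma self_adjoint_char_matrix:
  fixes A M :: "'a :: field mat"
  assumes A: "A \<in> carrier_mat k k" and M: "M \<in> carrier_mat k k"
    and M_sym: "transpose_mat M = M" and MA_sym: "transpose_mat (M * A) = M * A"
  shows "transpose_mat (M * char_matrix A ev) = M * char_matrix A ev"
proof -
  have "M * char_matrix A ev = M * A + (- ev) \<cdot>\<^sub>m M"
    unfolding char_matrix_def using A M
    by (simp add: mult_add_distrib_mat[of M k k A k] mult_smult_distrib[of M k k _ k])
  moreover have "transpose_mat (M * A + (- ev) \<cdot>\<^sub>m M) = M * A + (- ev) \<cdot>\<^sub>m M"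
    using A M M_sym MA_sym by (simp add: transpose_add[of _ k k] transpose_smult_mat)
  ultimately show ?thesis by simp
qed

lemma mult_mat_vec_zero[simp]:
  "M \<in> carrier_mat r k \<Longrightarrow> M *\<^sub>v 0\<^sub>v k = (0\<^sub>v r :: 'a :: comm_ring_1 vec)"
  by (intro eq_vecI) (auto simp: scalar_prod_def)

text \<open>If \<open>B\<^sup>2 v = 0\<close> then \<open>\<langle>B v, B v\<rangle> = \<langle>v, B\<^sup>2 v\<rangle> = 0\<close>.\<close>

lemma self_adjoint_mat_kernel_square:
  fixes B M :: "real mat"
  assumes B: "B \<in> carrier_mat k k" and M: "pos_def_mat k M"
    and MB_sym: "transpose_mat (M * B) = M * B"
  shows "mat_kernel (B ^\<^sub>m 2) = mat_kernel B"
proof -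
  have M_carrier: "M \<in> carrier_mat k k" and M_sym: "transpose_mat M = M"
    using M by (auto simp: pos_def_mat_def)
  have B2: "B ^\<^sub>m 2 = B * B" using B by (simp add: numeral_2_eq_2)
  have BB: "B * B \<in> carrier_mat k k" using B by simp
  have "B * B *\<^sub>v v = 0\<^sub>v k \<longleftrightarrow> B *\<^sub>v v = 0\<^sub>v k" if v: "v \<in> carrier_vec k" for v
  proof
    assume BBv: "B * B *\<^sub>v v = 0\<^sub>v k"
    show "B *\<^sub>v v = 0\<^sub>v k"
    proof (rule ccontr)
      assume nz: "B *\<^sub>v v \<noteq> 0\<^sub>v k"
      have Bv: "B *\<^sub>v v \<in> carrier_vec k" using B v by simp
      have "(B *\<^sub>v v) \<bullet> (M *\<^sub>v (B *\<^sub>v v)) = v \<bullet> (M *\<^sub>v (B *\<^sub>v (B *\<^sub>v v)))"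
        using scalar_prod_self_adjoint[OF B M_carrier M_sym MB_sym v Bv] by simp
      also have "\<dots> = 0" using B BBv M_carrier v by simp
      finally show False using M nz Bv by (auto simp: pos_def_mat_def)
    qed
  next
    assume "B *\<^sub>v v = 0\<^sub>v k"
    thus "B * B *\<^sub>v v = 0\<^sub>v k" using B v by simp
  qed
  thus ?thesis unfolding B2 mat_kernel[OF B] mat_kernel[OF BB] by auto
qed

lemma mult_mat_vec_Re_Im:
  fixes A :: "real mat" and v :: "complex vec"
  assumes A: "A \<in> carrier_mat k k" and v: "v \<in> carrier_vec k"
    and ev: "map_mat complex_of_real A *\<^sub>v v = a \<cdot>\<^sub>v v"
  shows "A *\<^sub>v map_vec Re v = Re a \<cdot>\<^sub>v map_vec Re v - Im a \<cdot>\<^sub>v map_vec Im v"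
    and "A *\<^sub>v map_vec Im v = Im a \<cdot>\<^sub>v map_vec Re v + Re a \<cdot>\<^sub>v map_vec Im v"
proof -
  have row: "(\<Sum>j<k. complex_of_real (A $$ (i, j)) * v $ j) = a * v $ i" if i: "i < k" for i
  proof -
    have "(map_mat complex_of_real A *\<^sub>v v) $ i = (a \<cdot>\<^sub>v v) $ i" using ev by simp
    thus ?thesis using i A v by (simp add: scalar_prod_def lessThan_atLeast0)
  qed
  show "A *\<^sub>v map_vec Re v = Re a \<cdot>\<^sub>v map_vec Re v - Im a \<cdot>\<^sub>v map_vec Im v"
    using arg_cong[OF row, of _ Re] A v
    by (intro eq_vecI) (auto simp: scalar_prod_def lessThan_atLeast0)
  show "A *\<^sub>v map_vec Im v = Im a \<cdot>\<^sub>v map_vec Re v + Re a \<cdot>\<^sub>v map_vec Im v"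
    using arg_cong[OF row, of _ Im] A v
    by (intro eq_vecI) (auto simp: scalar_prod_def lessThan_atLeast0)
qed

text \<open>With \<open>v = x + i y\<close>, self-adjointness gives \<open>\<langle>x, A y\<rangle> = \<langle>A x, y\<rangle>\<close>, which expands to
  \<open>Im a (\<langle>x, x\<rangle> + \<langle>y, y\<rangle>) = 0\<close>.\<close>

lemma self_adjoint_eigenvalue_real:
  fixes A M :: "real mat" and v :: "complex vec"
  assumes A: "A \<in> carrier_mat k k" and M: "pos_def_mat k M"
    and MA_sym: "transpose_mat (M * A) = M * A"
    and v: "v \<in> carrier_vec k" and v0: "v \<noteq> 0\<^sub>v k"
    and ev: "map_mat complex_of_real A *\<^sub>v v = a \<cdot>\<^sub>v v"
  shows "Im a = 0"
proof -
  have M_carrier: "M \<in> carrier_mat k k" and M_sym: "transpose_mat M = M"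
    using M by (auto simp: pos_def_mat_def)
  define x where "x = map_vec Re v"
  define y where "y = map_vec Im v"
  have x: "x \<in> carrier_vec k" and y: "y \<in> carrier_vec k" using v by (auto simp: x_def y_def)
  note Ax = mult_mat_vec_Re_Im(1)[OF A v ev, folded x_def y_def]
  note Ay = mult_mat_vec_Re_Im(2)[OF A v ev, folded x_def y_def]
  have Mx: "M *\<^sub>v x \<in> carrier_vec k" and My: "M *\<^sub>v y \<in> carrier_vec k"
    using M_carrier x y by auto
  have yx: "y \<bullet> (M *\<^sub>v x) = x \<bullet> (M *\<^sub>v y)" by (rule scalar_prod_sym_mat[OF M_carrier M_sym x y])
  have "Im a * (x \<bullet> (M *\<^sub>v x)) + Re a * (x \<bullet> (M *\<^sub>v y)) = x \<bullet> (M *\<^sub>v (A *\<^sub>v y))"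
    unfolding Ay using M_carrier x y Mx My
    by (simp add: mult_add_distrib_mat_vec[of M k k] mult_mat_vec scalar_prod_add_distrib[of _ k])
  also have "\<dots> = (A *\<^sub>v x) \<bullet> (M *\<^sub>v y)"
    by (rule scalar_prod_self_adjoint[OF A M_carrier M_sym MA_sym x y])
  also have "\<dots> = Re a * (x \<bullet> (M *\<^sub>v y)) - Im a * (y \<bullet> (M *\<^sub>v y))"
    unfolding Ax using x y My yx by (simp add: minus_scalar_prod_distrib[of _ k])
  finally have eq: "Im a * (x \<bullet> (M *\<^sub>v x) + y \<bullet> (M *\<^sub>v y)) = 0" by (simp add: algebra_simps)
  have "x \<noteq> 0\<^sub>v k \<or> y \<noteq> 0\<^sub>v k"
  proof (rule ccontr)
    assume "\<not> ?thesis"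
    hence "x = 0\<^sub>v k" "y = 0\<^sub>v k" by auto
    have "v $ i = 0" if i: "i < k" for i
    proof -
      have "Re (v $ i) = x $ i" "Im (v $ i) = y $ i" using i v by (auto simp: x_def y_def)
      thus ?thesis using i \<open>x = 0\<^sub>v k\<close> \<open>y = 0\<^sub>v k\<close> by (simp add: complex_eq_iff)
    qed
    hence "v = 0\<^sub>v k" using v by (intro eq_vecI) auto
    with v0 show False ..
  qed
  hence "x \<bullet> (M *\<^sub>v x) + y \<bullet> (M *\<^sub>v y) > 0"
    using M x y pos_def_mat_nonneg[OF M x] pos_def_mat_nonneg[OF M y]
    by (auto simp: pos_def_mat_def add_pos_nonneg add_nonneg_pos)
  with eq show ?thesis by simp
qed

interpretation of_real_poly_hom: map_poly_inj_idom_hom "of_real :: real \<Rightarrow> complex" ..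

lemma map_poly_of_real_linear_prod:
  "map_poly (of_real :: real \<Rightarrow> complex) (\<Prod>a\<leftarrow>xs. [:- a, 1:]) = (\<Prod>a\<leftarrow>xs. [:- of_real a, 1:])"
  by (induct xs) (simp_all only: list.map prod_list.Cons of_real_poly_hom.hom_mult, simp_all)

lemma self_adjoint_char_poly_real_factorization:
  fixes A M :: "real mat"
  assumes A: "A \<in> carrier_mat k k" and M: "pos_def_mat k M"
    and MA_sym: "transpose_mat (M * A) = M * A"
  obtains as where "char_poly A = (\<Prod>a\<leftarrow>as. [:- a, 1:])"
proof -
  define Ac where "Ac = map_mat complex_of_real A"
  have Ac: "Ac \<in> carrier_mat k k" using A unfolding Ac_def by auto
  obtain as where as: "char_poly Ac = (\<Prod>a\<leftarrow>as. [:- a, 1:])"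
    using char_poly_factorized[OF Ac] by blast
  have real: "of_real (Re a) = a" if a: "a \<in> set as" for a
  proof -
    have "poly (char_poly Ac) a = 0" unfolding as using a by (rule linear_poly_root)
    then obtain v where "eigenvector Ac v a"
      using eigenvalue_root_char_poly[OF Ac] unfolding eigenvalue_def by blast
    hence "v \<in> carrier_vec k" "v \<noteq> 0\<^sub>v k" "Ac *\<^sub>v v = a \<cdot>\<^sub>v v"
      unfolding eigenvector_def using Ac by auto
    hence "Im a = 0" unfolding Ac_def by (rule self_adjoint_eigenvalue_real[OF A M MA_sym])
    thus ?thesis by (simp add: complex_eq_iff)
  qed
  have "map_poly (of_real :: real \<Rightarrow> complex) (char_poly A) = char_poly Ac"
    unfolding Ac_def by (rule of_real_hom.char_poly_hom[OF A, symmetric])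
  also have "\<dots> = (\<Prod>a\<leftarrow>map Re as. [:- of_real a, 1:])"
    unfolding as using real by (induct as) auto
  also have "\<dots> = map_poly of_real (\<Prod>a\<leftarrow>map Re as. [:- a, 1:])"
    by (rule map_poly_of_real_linear_prod[symmetric])
  finally have "char_poly A = (\<Prod>a\<leftarrow>map Re as. [:- a, 1:])" by simp
  thus ?thesis by (rule that)
qed

lemma diagonal_jordan_matrix:
  assumes "\<And>n a. (n, a) \<in> set n_as \<Longrightarrow> n = 1"
  shows "diagonal_mat (jordan_matrix (n_as :: (nat \<times> 'a :: {zero, one}) list))"
  using assms
proof (induct n_as)
  case Nil
  show ?case unfolding jordan_matrix_def diagonal_mat_def by simp
next
  case (Cons na n_as)
  obtain n a where na: "na = (n, a)" by (cases na)
  have "n = 1" using Cons(2) na by auto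
  moreover have "diagonal_mat (jordan_matrix n_as)" using Cons by auto
  ultimately show ?case unfolding na jordan_matrix_Cons diagonal_mat_def by auto
qed

text \<open>The multiplicity formula for \<open>dim_gen_eigenspace\<close> shows that equal kernel
  dimensions of \<open>(A - ev)\<close> and \<open>(A - ev)\<^sup>2\<close> rule out Jordan blocks of size \<open>\<ge> 2\<close>.\<close>

lemma jordan_nf_block_size_one:
  assumes jnf: "jordan_nf A n_as"
    and dims: "\<And>ev. dim_gen_eigenspace A ev 2 = dim_gen_eigenspace A ev 1"
    and block: "(n, a) \<in> set n_as"
  shows "n = 1"
proof -
  define sizes where "sizes = map fst [(n, e)\<leftarrow>n_as . e = a]"
  have "sum_list (map (min 2) sizes)
      = sum_list (map (min 1) sizes) + sum_list (map (\<lambda>s. min 2 s - min 1 s) sizes)"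
    by (simp add: sum_list_addf[symmetric])
  moreover have "sum_list (map (min 2) sizes) = sum_list (map (min 1) sizes)"
    using dims[of a] unfolding dim_gen_eigenspace[OF jnf] sizes_def by simp
  ultimately have "\<forall>s \<in> set sizes. min 2 s - min 1 s = (0 :: nat)" by simp
  moreover have "n \<in> set sizes" unfolding sizes_def using block by force
  ultimately have "n \<le> 1" by fastforce
  moreover have "n \<noteq> 0" using jnf block unfolding jordan_nf_def by force
  ultimately show "n = 1" by simp
qed

theorem self_adjoint_diagonalizable:
  fixes A M :: "real mat"
  assumes A: "A \<in> carrier_mat k k" and M: "pos_def_mat k M"
    and MA_sym: "transpose_mat (M * A) = M * A"
  shows "diagonalizable_mat A"
proof -
  have M_carrier: "M \<in> carrier_mat k k" and M_sym: "transpose_mat M = M"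
    using M by (auto simp: pos_def_mat_def)
  obtain as where "char_poly A = (\<Prod>a\<leftarrow>as. [:- a, 1:])"
    using self_adjoint_char_poly_real_factorization[OF A M MA_sym] .
  then obtain n_as where jnf: "jordan_nf A n_as" using jordan_nf_exists[OF A] by blast
  have "dim_gen_eigenspace A ev 2 = dim_gen_eigenspace A ev 1" for ev
  proof -
    have B: "char_matrix A ev \<in> carrier_mat k k" using A by simp
    have "mat_kernel (char_matrix A ev ^\<^sub>m 2) = mat_kernel (char_matrix A ev ^\<^sub>m 1)"
      using self_adjoint_mat_kernel_square[OF B M
          self_adjoint_char_matrix[OF A M_carrier M_sym MA_sym]] B by simp
    thus ?thesis unfolding dim_gen_eigenspace_def kernel_dim_def using B by simp
  qed
  hence "diagonal_mat (jordan_matrix n_as)"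
    using jordan_nf_block_size_one[OF jnf] diagonal_jordan_matrix by blast
  moreover have "similar_mat A (jordan_matrix n_as)" using jnf unfolding jordan_nf_def by simp
  ultimately show ?thesis unfolding diagonalizable_mat_def by blast
qed

lemma diag_of_carrier[simp]: "diag_of k d \<in> carrier_mat k k"
  unfolding diag_of_def by simp

lemma transpose_diag_of[simp]: "transpose_mat (diag_of k d) = diag_of k d"
  unfolding diag_of_def by (rule eq_matI) auto

lemma diag_of_mult: "diag_of k d * diag_of k d' = diag_of k (\<lambda>i. d i * d' i)"
proof (rule eq_matI)
  fix i j
  assume "i < dim_row (diag_of k (\<lambda>i. d i * d' i))" "j < dim_col (diag_of k (\<lambda>i. d i * d' i))"
  hence i: "i < k" and j: "j < k" unfolding diag_of_def by auto
  have "(diag_of k d * diag_of k d') $$ (i, j)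
      = (\<Sum>l\<in>{0..<k}. (if i = l then d i else 0) * (if l = j then d' l else 0))"
    using i j unfolding diag_of_def by (simp add: scalar_prod_def)
  also have "\<dots> = (\<Sum>l\<in>{0..<k}. if l = i then (if i = j then d i * d' i else 0) else 0)"
    by (rule sum.cong) auto
  also have "\<dots> = diag_of k (\<lambda>i. d i * d' i) $$ (i, j)" using i j unfolding diag_of_def by simp
  finally show "(diag_of k d * diag_of k d') $$ (i, j) = diag_of k (\<lambda>i. d i * d' i) $$ (i, j)" .
qed (auto simp: diag_of_def)

lemma inv_mat_eqI:
  assumes M: "M \<in> carrier_mat k k" and Q: "Q \<in> carrier_mat k k"
    and MQ: "M * Q = 1\<^sub>m k" and QM: "Q * M = 1\<^sub>m k"
  shows "inv_mat k M = Q"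
proof -
  let ?P = "\<lambda>Q. Q \<in> carrier_mat k k \<and> M * Q = 1\<^sub>m k \<and> Q * M = 1\<^sub>m k"
  have "?P (inv_mat k M)" unfolding inv_mat_def by (rule someI[of ?P Q]) (use assms in simp)
  hence inv: "inv_mat k M \<in> carrier_mat k k" "inv_mat k M * M = 1\<^sub>m k" by auto
  have "inv_mat k M = inv_mat k M * (M * Q)" using MQ inv by simp
  also have "\<dots> = (inv_mat k M * M) * Q"
    by (rule assoc_mult_mat[symmetric]) (use inv M Q in auto)
  also have "\<dots> = Q" using inv Q by simp
  finally show ?thesis .
qed

lemma inv_mat_diag_of:
  assumes "\<And>i. i < k \<Longrightarrow> d i \<noteq> 0"
  shows "inv_mat k (diag_of k d) = diag_of k (\<lambda>i. 1 / d i)"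
proof -
  have "diag_of k (\<lambda>i. d i * (1 / d i)) = 1\<^sub>m k" "diag_of k (\<lambda>i. 1 / d i * d i) = 1\<^sub>m k"
    using assms unfolding diag_of_def by auto
  thus ?thesis by (intro inv_mat_eqI) (simp_all add: diag_of_mult)
qed

lemma transpose_mult_sym_mult_transpose:
  fixes A S :: "'a :: comm_semiring_0 mat"
  assumes A: "A \<in> carrier_mat a b" and S: "S \<in> carrier_mat b b" and S_sym: "transpose_mat S = S"
  shows "transpose_mat (A * S * transpose_mat A) = A * S * transpose_mat A"
proof -
  have "transpose_mat (A * S * transpose_mat A)
      = transpose_mat (transpose_mat A) * transpose_mat (A * S)"
    by (rule transpose_mult[of _ a b]) (use A S in auto)
  also have "transpose_mat (A * S) = transpose_mat S * transpose_mat A"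
    by (rule transpose_mult[of _ a b]) (use A S in auto)
  finally show ?thesis using A S S_sym by simp
qed

lemma scalar_prod_diag_of:
  assumes u: "u \<in> carrier_vec m"
  shows "u \<bullet> (diag_of m w *\<^sub>v u) = (\<Sum>l<m. w l * (u $ l)\<^sup>2)"
proof -
  have "(diag_of m w *\<^sub>v u) $ l = w l * u $ l" if l: "l < m" for l
  proof -
    have "(diag_of m w *\<^sub>v u) $ l = (\<Sum>j\<in>{0..<m}. (if l = j then w l else 0) * u $ j)"
      using l u unfolding diag_of_def by (simp add: scalar_prod_def)
    also have "\<dots> = (\<Sum>j\<in>{0..<m}. if j = l then w l * u $ l else 0)" by (rule sum.cong) auto
    finally show ?thesis using l by simp
  qed
  moreover have "dim_vec (diag_of m w *\<^sub>v u) = m" by (simp add: diag_of_def)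
  ultimately show ?thesis
    unfolding scalar_prod_def lessThan_atLeast0 by (auto simp: power2_eq_square intro: sum.cong)
qed

text \<open>Only the identity block of \<open>R\<close> matters: \<open>(R\<^sup>T x)\<^sub>i = x\<^sub>i\<close> for \<open>i < k\<close>.\<close>

lemma pos_def_mat_mult_diag_of_transpose:
  fixes R :: "real mat"
  assumes R: "R \<in> carrier_mat k m" and km: "k \<le> m"
    and R_id: "\<And>i j. i < k \<Longrightarrow> j < k \<Longrightarrow> R $$ (i, j) = (if i = j then 1 else 0)"
    and w: "\<And>l. l < m \<Longrightarrow> w l > 0"
  shows "pos_def_mat k (R * diag_of m w * transpose_mat R)"
  unfolding pos_def_mat_def
proof (intro conjI ballI impI)
  show "R * diag_of m w * transpose_mat R \<in> carrier_mat k k" using R by auto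
  show "transpose_mat (R * diag_of m w * transpose_mat R) = R * diag_of m w * transpose_mat R"
    by (rule transpose_mult_sym_mult_transpose[OF R]) simp_all
  fix x :: "real vec" assume x: "x \<in> carrier_vec k" and x0: "x \<noteq> 0\<^sub>v k"
  define u where "u = transpose_mat R *\<^sub>v x"
  have u: "u \<in> carrier_vec m" unfolding u_def using R x by simp
  obtain i where i: "i < k" and xi: "x $ i \<noteq> 0"
    using x x0 by (metis carrier_vecD eq_vecI index_zero_vec)
  have ui: "u $ i = x $ i"
  proof -
    have "u $ i = (\<Sum>j\<in>{0..<k}. R $$ (j, i) * x $ j)"
      unfolding u_def using i km R x by (simp add: scalar_prod_def)
    also have "\<dots> = (\<Sum>j\<in>{0..<k}. if j = i then x $ i else 0)"
      using i R_id by (intro sum.cong) auto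
    finally show ?thesis using i by simp
  qed
  have Rt: "transpose_mat R \<in> carrier_mat m k" using R by simp
  have WRt: "diag_of m w * transpose_mat R \<in> carrier_mat m k"
    by (rule mult_carrier_mat[OF diag_of_carrier Rt])
  have "R * diag_of m w * transpose_mat R *\<^sub>v x = R *\<^sub>v (diag_of m w *\<^sub>v u)"
    unfolding u_def assoc_mult_mat[OF R diag_of_carrier Rt]
    using assoc_mult_mat_vec[OF R WRt x] assoc_mult_mat_vec[OF diag_of_carrier Rt x] by simp
  moreover have "diag_of m w *\<^sub>v u \<in> carrier_vec m"
    by (rule mult_mat_vec_carrier[OF diag_of_carrier u])
  ultimately have "x \<bullet> (R * diag_of m w * transpose_mat R *\<^sub>v x) = u \<bullet> (diag_of m w *\<^sub>v u)"
    using transpose_vec_mult_scalar[OF R _ x] unfolding u_def by simp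
  also have "\<dots> = (\<Sum>l<m. w l * (u $ l)\<^sup>2)" by (rule scalar_prod_diag_of[OF u])
  also have "\<dots> > 0" using i km xi ui w
    by (intro sum_pos2[of _ i]) (auto intro!: mult_nonneg_nonneg simp: less_imp_le)
  finally show "x \<bullet> (R * diag_of m w * transpose_mat R *\<^sub>v x) > 0" .
qed

lemma R_mat_identity_block:
  "i < n - 1 \<Longrightarrow> j < n - 1 \<Longrightarrow> n - 1 \<le> m \<Longrightarrow> R_mat n m e $$ (i, j) = (if i = j then 1 else 0)"
  unfolding R_mat_def by simp

lemma L_es_tau_carrier_sym:
  assumes "\<And>i. i < n \<Longrightarrow> eps i \<noteq> 0"
  shows "L_es_tau n e eps \<in> carrier_mat (n - 1) (n - 1)"
    and "transpose_mat (L_es_tau n e eps) = L_es_tau n e eps"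
proof -
  have Dt: "transpose_mat (D_tau n e) \<in> carrier_mat (n - 1) n"
    unfolding D_tau_def incidence_mat_def by simp
  have L_eq: "L_es_tau n e eps = transpose_mat (D_tau n e) * diag_of n (\<lambda>i. 1 / eps i) * D_tau n e"
    unfolding L_es_tau_def using assms by (subst inv_mat_diag_of) auto
  show "L_es_tau n e eps \<in> carrier_mat (n - 1) (n - 1)" unfolding L_eq using Dt by auto
  from transpose_mult_sym_mult_transpose[OF Dt diag_of_carrier transpose_diag_of]
  show "transpose_mat (L_es_tau n e eps) = L_es_tau n e eps" unfolding L_eq transpose_transpose .
qed

lemma transpose_mult_neg_mult:
  fixes L M :: "'a :: comm_ring mat"
  assumes L: "L \<in> carrier_mat k k" and M: "M \<in> carrier_mat k k"
    and L_sym: "transpose_mat L = L" and M_sym: "transpose_mat M = M"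
  shows "transpose_mat (M * - (L * M)) = M * - (L * M)"
  using transpose_mult_sym_mult_transpose[OF M L L_sym] L M M_sym
  by (simp add: transpose_uminus)

theorem proposition1:
  fixes n m :: nat and e :: "nat \<Rightarrow> nat \<times> nat"
    and w :: "nat \<Rightarrow> real" and eps :: "nat \<Rightarrow> real"
  assumes "n \<ge> 2"
    and "\<forall>l<m. fst (e l) < n \<and> snd (e l) < n \<and> fst (e l) \<noteq> snd (e l)"
    and "inj_on (\<lambda>l. {fst (e l), snd (e l)}) {..<m}"
    and "connected_on n (e ` {..<m})"
    and "n - 1 \<le> m"
    and "spanning_tree n (e ` {..<m}) (e ` {..<n - 1})"
    and "\<forall>l<m. w l > 0"
    and "\<forall>i<n. eps i > 0"
  shows "diagonalizable_mat
           (- (L_es_tau n e eps * R_mat n m e * diag_of m w * transpose_mat (R_mat n m e)))"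
proof -
  define k where "k = n - 1"
  define L where "L = L_es_tau n e eps"
  define M where "M = R_mat n m e * diag_of m w * transpose_mat (R_mat n m e)"
  have eps: "\<And>i. i < n \<Longrightarrow> eps i \<noteq> 0" using assms(8) by force
  have L: "L \<in> carrier_mat k k" unfolding L_def k_def by (rule L_es_tau_carrier_sym(1)[OF eps])
  have L_sym: "transpose_mat L = L" unfolding L_def by (rule L_es_tau_carrier_sym(2)[OF eps])
  have R: "R_mat n m e \<in> carrier_mat k m" unfolding R_mat_def k_def by simp
  have M: "pos_def_mat k M" unfolding M_def
    using pos_def_mat_mult_diag_of_transpose[OF R] R_mat_identity_block assms(5,7) k_def by simp
  hence M_carrier: "M \<in> carrier_mat k k" and M_sym: "transpose_mat M = M"
    by (auto simp: pos_def_mat_def)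
  have RW: "R_mat n m e * diag_of m w \<in> carrier_mat k m" using R by auto
  have "L_es_tau n e eps * R_mat n m e * diag_of m w * transpose_mat (R_mat n m e) = L * M"
    unfolding L_def[symmetric] M_def using R
      assoc_mult_mat[OF L RW, of "transpose_mat (R_mat n m e)"] assoc_mult_mat[OF L R diag_of_carrier]
    by simp
  moreover have "- (L * M) \<in> carrier_mat k k" using L M_carrier by simp
  ultimately show ?thesis
    using self_adjoint_diagonalizable[OF _ M transpose_mult_neg_mult[OF L M_carrier L_sym M_sym]]
    by simp
qed

end
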